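(* Let $A$ be a finite multiset of $n$ points in $\mathbb{R}^d$ with mean $\mu$, $\varepsilon>0$, $\gamma>0$, and let $i$ be a non-negative integer. Let $P\subset\mathbb{R}^d$ be a finite multiset of points (means) such that at least a $\left(1-\left(\frac{3}{10}\right)^{i+1}\right)$ fraction of them are $\gamma$-good. Then $\textsc{MinSumSelect}(P,i)$ returns a point that is $5^{i+1}\gamma$-good.
   Context: $\mu=\frac1n\sum_{p\in A}p$, $\mathrm{Opt}=\sum_{p\in A}\|p-\mu\|^2$. A point $x$ is $\gamma$-good if $\|x-\mu\|\le\gamma\sqrt{\frac{\varepsilon\,\mathrm{Opt}}{n}}$. $\textsc{ComputeWinner}(Q)$: for each $q_j\in Q$ let $\rho_j$ be the distance from $q_j$ to its $\lceil\frac{7}{10}|Q|\rceil$-th closest point of $Q$, and $D_j=\sum_{q\in Q,\ \|q-q_j\|\le\rho_j}\|q-q_j\|$; output a $q_j$ minimizing $D_j$. $\textsc{MinSumSelect}(P,i)$: if $i=0$ or $|P|=1$, let $W=P$; otherwise split $P$ arbitrarily into $\sqrt{|P|}$ clusters $P_1,\dots,P_{\sqrt{|P|}}$ of size $\sqrt{|P|}$ each and let $W=\{\textsc{MinSumSelect}(P_j,i-1)\}_j$; output $\textsc{ComputeWinner}(W)$. Integrality issues are ignored (all square roots arising in the recursion are treated as integers). *)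

theory Defs
  imports "HOL-Analysis.Analysis" "HOL-Library.Multiset"
begin

definition mean :: "'a::euclidean_space multiset \<Rightarrow> 'a" where
  "mean A = (1 / real (size A)) *\<^sub>R sum_mset A"

definition opt_cost :: "'a::euclidean_space multiset \<Rightarrow> real" where
  "opt_cost A = sum_mset (image_mset (\<lambda>p. (norm (p - mean A))\<^sup>2) A)"

definition gamma_good :: "'a::euclidean_space multiset \<Rightarrow> real \<Rightarrow> real \<Rightarrow> 'a \<Rightarrow> bool" where
  "gamma_good A \<epsilon> \<gamma> x \<longleftrightarrow>
     norm (x - mean A) \<le> \<gamma> * sqrt (\<epsilon> * opt_cost A / real (size A))"

text \<open>rho: distance from x to its k-th closest point of Q (counted with multiplicity,
  x itself included), where k = ceil(7/10 |Q|).\<close>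
definition cw_rho :: "'a::euclidean_space multiset \<Rightarrow> 'a \<Rightarrow> real" where
  "cw_rho Q x = sorted_list_of_multiset (image_mset (\<lambda>q. dist q x) Q)
                  ! (nat \<lceil>7/10 * real (size Q)\<rceil> - 1)"

definition cw_D :: "'a::euclidean_space multiset \<Rightarrow> 'a \<Rightarrow> real" where
  "cw_D Q x = sum_mset (image_mset (\<lambda>q. dist q x) (filter_mset (\<lambda>q. dist q x \<le> cw_rho Q x) Q))"

text \<open>x is a possible output of ComputeWinner(Q) (ties broken arbitrarily).\<close>
definition compute_winner :: "'a::euclidean_space multiset \<Rightarrow> 'a \<Rightarrow> bool" where
  "compute_winner Q x \<longleftrightarrow> x \<in># Q \<and> (\<forall>y\<in>#Q. cw_D Q x \<le> cw_D Q y)"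

text \<open>x is a possible output of MinSumSelect(P,i) (arbitrary split into sqrt|P| clusters
  of size sqrt|P|, arbitrary tie breaking). Integrality: the recursive step is only
  defined when |P| is a perfect square.\<close>
inductive min_sum_select :: "'a::euclidean_space multiset \<Rightarrow> nat \<Rightarrow> 'a \<Rightarrow> bool" where
  base: "\<lbrakk>i = 0 \<or> size P = 1; compute_winner P x\<rbrakk> \<Longrightarrow> min_sum_select P i x"
| step: "\<lbrakk>size P \<noteq> 1; size P = k * k; length Ps = k; \<forall>Pj\<in>set Ps. size Pj = k;
          sum_list Ps = P; list_all2 (\<lambda>Pj w. min_sum_select Pj i w) Ps ws;
          compute_winner (mset ws) x\<rbrakk> \<Longrightarrow> min_sum_select P (Suc i) x"

end

(*
  ComputeWinner is robust: suppose 7/10 of Q lies in the ball B(c,R) and pick g in Q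
  inside it.  As B(g,2R) contains B(c,R), the rho-ball around g has radius at most 2R,
  so D_g <= 2R |Q /\ B(g,2R)|.
  If |x - c| > 5R, every point of B(g,2R) is farther than 2R from x and every point of
  B(c,R) farther than 4R; as the rho-ball around x also holds 7/10 of Q, it meets these
  two balls often enough to force D_x > D_g, so x cannot win.
  MinSumSelect then follows by induction on i: when a 1 - (3/10)^(i+2) fraction of P is
  good, Markov's inequality on the per-cluster deficits shows that 7/10 of the clusters
  are good to within a 1 - (3/10)^(i+1) fraction, their winners are 5^(i+1) gamma-good by
  induction, and the final ComputeWinner costs one more factor 5.
*)
theory Submission
  imports Defs
begin

lemma sorted_nth_le_iff_length_filter:
  fixes xs :: "'a::linorder list"
  assumes "sorted xs" and "k < length xs"
  shows "xs ! k \<le> c \<longleftrightarrow> k < length (filter (\<lambda>v. v \<le> c) xs)"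
proof -
  have len: "length (filter (\<lambda>v. v \<le> c) xs) = card {i. i < length xs \<and> xs ! i \<le> c}"
    by (simp add: length_filter_conv_card)
  show ?thesis
  proof
    assume "xs ! k \<le> c"
    have "xs ! i \<le> c" if "i \<le> k" for i
      using sorted_nth_mono[OF assms(1) that assms(2)] \<open>xs ! k \<le> c\<close> by (rule order_trans)
    then have "{0..k} \<subseteq> {i. i < length xs \<and> xs ! i \<le> c}"
      using assms(2) by auto
    then have "card {0..k} \<le> card {i. i < length xs \<and> xs ! i \<le> c}"
      by (rule card_mono[rotated]) simp
    then show "k < length (filter (\<lambda>v. v \<le> c) xs)"
      by (simp add: len)
  next
    assume count: "k < length (filter (\<lambda>v. v \<le> c) xs)"
    show "xs ! k \<le> c"
    proof (rule ccontr)
      assume "\<not> xs ! k \<le> c"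
      then have "i < k" if "i < length xs" and "xs ! i \<le> c" for i
        using sorted_nth_mono[OF assms(1), of k i] that by force
      then have "{i. i < length xs \<and> xs ! i \<le> c} \<subseteq> {0..<k}"
        by auto
      then have "card {i. i < length xs \<and> xs ! i \<le> c} \<le> card {0..<k}"
        by (rule card_mono[rotated]) simp
      then show False
        using count by (simp add: len)
    qed
  qed
qed

lemma cw_rho_le_iff:
  assumes "Q \<noteq> {#}"
  shows "cw_rho Q y \<le> r \<longleftrightarrow> nat \<lceil>7/10 * real (size Q)\<rceil> \<le> size (filter_mset (\<lambda>q. dist q y \<le> r) Q)"
proof -
  define xs where "xs = sorted_list_of_multiset (image_mset (\<lambda>q. dist q y) Q)"
  define k where "k = nat \<lceil>7/10 * real (size Q)\<rceil> - 1"
  have mset_xs: "mset xs = image_mset (\<lambda>q. dist q y) Q"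
    unfolding xs_def by (rule mset_sorted_list_of_multiset)
  have "0 < size Q"
    using assms by (simp only: nonempty_has_size)
  then have k: "nat \<lceil>7/10 * real (size Q)\<rceil> = Suc k" and "k < size Q"
    unfolding k_def by linarith+
  have "length xs = size Q"
    by (metis mset_xs size_image_mset size_mset)
  have "length (filter (\<lambda>v. v \<le> r) xs) = size (filter_mset (\<lambda>v. v \<le> r) (mset xs))"
    by (simp only: size_mset flip: mset_filter)
  also have "\<dots> = size (filter_mset (\<lambda>q. dist q y \<le> r) Q)"
    by (simp add: mset_xs filter_mset_image_mset)
  finally have count: "length (filter (\<lambda>v. v \<le> r) xs) = size (filter_mset (\<lambda>q. dist q y \<le> r) Q)" .
  have "cw_rho Q y = xs ! k"
    unfolding cw_rho_def xs_def k_def ..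
  moreover have "xs ! k \<le> r \<longleftrightarrow> k < length (filter (\<lambda>v. v \<le> r) xs)"
    using \<open>k < size Q\<close> \<open>length xs = size Q\<close> unfolding xs_def
    by (intro sorted_nth_le_iff_length_filter sorted_sorted_list_of_multiset) simp
  ultimately show ?thesis
    unfolding k count Suc_le_eq by simp
qed

lemma sum_mset_if_const:
  "(\<Sum>x\<in>#M. if P x then a else 0) = of_nat (size (filter_mset P M)) * (a :: 'b::semiring_1)"
  by (induction M) (simp_all add: algebra_simps)

lemma cw_D_le:
  assumes "Q \<noteq> {#}" and "0 \<le> r"
    and dense: "nat \<lceil>7/10 * real (size Q)\<rceil> \<le> size (filter_mset (\<lambda>q. dist q y \<le> r) Q)"
  shows "cw_D Q y \<le> r * size (filter_mset (\<lambda>q. dist q y \<le> r) Q)"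
proof -
  have "cw_rho Q y \<le> r"
    using dense cw_rho_le_iff[OF \<open>Q \<noteq> {#}\<close>] by blast
  then have "cw_D Q y \<le> (\<Sum>q\<in>#filter_mset (\<lambda>q. dist q y \<le> cw_rho Q y) Q. r)"
    unfolding cw_D_def by (intro sum_mset_mono) auto
  also have "\<dots> = r * size (filter_mset (\<lambda>q. dist q y \<le> cw_rho Q y) Q)"
    by simp
  also have "\<dots> \<le> r * size (filter_mset (\<lambda>q. dist q y \<le> r) Q)"
    using \<open>cw_rho Q y \<le> r\<close> \<open>0 \<le> r\<close>
    by (intro mult_left_mono of_nat_mono size_mset_mono filter_mset_mono_strong) auto
  finally show ?thesis .
qed

lemma dist_le_ball_diameter:
  assumes "norm (p - c) \<le> R" and "norm (q - c) \<le> R"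
  shows "dist p q \<le> 2 * R"
  using assms dist_triangle2[of p q c] by (simp add: dist_norm)

lemma cw_D_far_point_ge:
  fixes Q :: "'a::euclidean_space multiset"
  assumes "norm (g - c) \<le> R" and "norm (x - c) = 5 * R + \<delta>"
  defines "S \<equiv> filter_mset (\<lambda>q. dist q x \<le> cw_rho Q x) Q"
  shows "(2 * R + \<delta>) * size (filter_mset (\<lambda>q. dist q g \<le> 2 * R) S)
           + 2 * R * size (filter_mset (\<lambda>q. norm (q - c) \<le> R) S) \<le> cw_D Q x"
proof -
  let ?G = "\<lambda>q. norm (q - c) \<le> R" and ?F = "\<lambda>q. dist q g \<le> 2 * R"
  have G_F: "?F q" if "?G q" for q
    using that assms(1) by (rule dist_le_ball_diameter)
  have "(2 * R + \<delta>) * size (filter_mset ?F S) + 2 * R * size (filter_mset ?G S)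
      = (\<Sum>q\<in>#S. (if ?F q then 2 * R + \<delta> else 0) + (if ?G q then 2 * R else 0))"
    by (simp add: sum_mset.distrib sum_mset_if_const)
  also have "\<dots> \<le> (\<Sum>q\<in>#S. dist q x)"
  proof (rule sum_mset_mono)
    fix q
    have x_q: "norm (x - c) \<le> dist q x + norm (q - c)"
      and q_g: "norm (q - c) \<le> dist q g + norm (g - c)"
      by (metis dist_commute dist_norm dist_triangle)+
    consider "?G q" | "\<not> ?G q" "?F q" | "\<not> ?F q"
      using G_F by blast
    then show "(if ?F q then 2 * R + \<delta> else 0) + (if ?G q then 2 * R else 0) \<le> dist q x"
    proof cases
      case 1
      then show ?thesis
        using G_F[OF 1] x_q assms(2) by simp
    next
      case 2
      then show ?thesis
        using x_q q_g assms by simp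
    next
      case 3
      then show ?thesis
        using G_F by auto
    qed
  qed
  also have "\<dots> = cw_D Q x"
    by (simp add: cw_D_def S_def)
  finally show ?thesis .
qed

lemma size_filter_mset_inter_ge:
  "size (filter_mset P M) + size (filter_mset Q M) \<le> size (filter_mset Q (filter_mset P M)) + size M"
  by (induction M) auto

lemma size_filter_mset_overlap:
  assumes G_F: "\<And>q. G q \<Longrightarrow> F q" and "M \<noteq> {#}"
    and S: "7 * size M \<le> 10 * size (filter_mset S M)"
    and G: "7 * size M \<le> 10 * size (filter_mset G M)"
  shows "size (filter_mset F M) \<le> size (filter_mset F (filter_mset S M)) + size (filter_mset G (filter_mset S M))"
    and "0 < size (filter_mset F (filter_mset S M))"
proof -
  have "size (filter_mset G (filter_mset S M)) \<le> size (filter_mset F (filter_mset S M))"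
    by (intro size_mset_mono filter_mset_mono_strong[OF subset_mset.order_refl]) (auto intro: G_F)
  moreover have "0 < size M"
    using \<open>M \<noteq> {#}\<close> by (simp only: nonempty_has_size)
  ultimately show "size (filter_mset F M) \<le> size (filter_mset F (filter_mset S M)) + size (filter_mset G (filter_mset S M))"
    and "0 < size (filter_mset F (filter_mset S M))"
    using size_filter_mset_inter_ge[of S M F] size_filter_mset_inter_ge[of S M G] S G by linarith+
qed

lemma compute_winner_near_centre:
  assumes winner: "compute_winner Q x"
    and dense: "real (size (filter_mset (\<lambda>q. norm (q - c) \<le> R) Q)) \<ge> 7/10 * real (size Q)"
  shows "norm (x - c) \<le> 5 * R"
proof (rule ccontr)
  assume "\<not> norm (x - c) \<le> 5 * R"
  then obtain \<delta> where "\<delta> > 0" and far: "norm (x - c) = 5 * R + \<delta>"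
    by (intro that[of "norm (x - c) - 5 * R"]) auto
  have "x \<in># Q" and minimal: "\<And>y. y \<in># Q \<Longrightarrow> cw_D Q x \<le> cw_D Q y"
    using winner by (auto simp: compute_winner_def)
  then have "Q \<noteq> {#}" by auto
  define k where "k = nat \<lceil>7/10 * real (size Q)\<rceil>"
  have "real (7 * size Q) \<le> real (10 * k)"
    using le_of_int_ceiling[of "7/10 * real (size Q)"] by (simp add: k_def) linarith
  then have k: "7 * size Q \<le> 10 * k"
    by (simp only: of_nat_le_iff)
  let ?G = "\<lambda>q. norm (q - c) \<le> R" and ?S = "\<lambda>q. dist q x \<le> cw_rho Q x"
  have "k \<le> size (filter_mset ?G Q)"
    using dense by (simp add: k_def nat_le_iff ceiling_le_iff)
  then have "filter_mset ?G Q \<noteq> {#}"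
    using k \<open>Q \<noteq> {#}\<close> by (simp only: nonempty_has_size)
  then obtain g where "g \<in># filter_mset ?G Q"
    by blast
  then have "g \<in># Q" and "?G g"
    by simp_all
  then have "R \<ge> 0"
    using norm_ge_zero[of "g - c"] by linarith
  let ?F = "\<lambda>q. dist q g \<le> 2 * R"
  have G_F: "?F q" if "?G q" for q
    using that \<open>?G g\<close> by (rule dist_le_ball_diameter)
  have "k \<le> size (filter_mset ?S Q)"
    using cw_rho_le_iff[OF \<open>Q \<noteq> {#}\<close>, of x "cw_rho Q x"] by (simp add: k_def)
  with k \<open>k \<le> size (filter_mset ?G Q)\<close>
  have "7 * size Q \<le> 10 * size (filter_mset ?S Q)" and "7 * size Q \<le> 10 * size (filter_mset ?G Q)"
    by linarith+
  note overlap = size_filter_mset_overlap[of ?G ?F, OF G_F \<open>Q \<noteq> {#}\<close> this]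
  define n\<^sub>F n\<^sub>S\<^sub>F n\<^sub>S\<^sub>G
    where "n\<^sub>F = size (filter_mset ?F Q)"
      and "n\<^sub>S\<^sub>F = size (filter_mset ?F (filter_mset ?S Q))"
      and "n\<^sub>S\<^sub>G = size (filter_mset ?G (filter_mset ?S Q))"
  have "size (filter_mset ?G Q) \<le> n\<^sub>F"
    unfolding n\<^sub>F_def by (intro size_mset_mono filter_mset_mono_strong) (auto intro: G_F)
  then have D_g: "cw_D Q g \<le> 2 * R * n\<^sub>F"
    using \<open>k \<le> size (filter_mset ?G Q)\<close> \<open>R \<ge> 0\<close> cw_D_le[OF \<open>Q \<noteq> {#}\<close>, of "2 * R" g]
    by (simp add: n\<^sub>F_def k_def)
  have D_x: "(2 * R + \<delta>) * n\<^sub>S\<^sub>F + 2 * R * n\<^sub>S\<^sub>G \<le> cw_D Q x"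
    unfolding n\<^sub>S\<^sub>F_def n\<^sub>S\<^sub>G_def using \<open>?G g\<close> far by (rule cw_D_far_point_ge)
  have "2 * R * n\<^sub>F \<le> 2 * R * (n\<^sub>S\<^sub>F + n\<^sub>S\<^sub>G)" and "0 < \<delta> * n\<^sub>S\<^sub>F"
    using overlap \<open>R \<ge> 0\<close> \<open>\<delta> > 0\<close> unfolding n\<^sub>F_def n\<^sub>S\<^sub>F_def n\<^sub>S\<^sub>G_def
    by (simp_all add: mult_left_mono)
  then show False
    using minimal[OF \<open>g \<in># Q\<close>] D_g D_x unfolding ring_distribs of_nat_add by linarith
qed

lemma markov_sum_list:
  fixes f :: "'a \<Rightarrow> real"
  assumes "\<forall>x\<in>set xs. 0 \<le> f x"
  shows "c * real (length (filter (\<lambda>x. c < f x) xs)) \<le> (\<Sum>x\<leftarrow>xs. f x)"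
  using assms by (induction xs) (auto simp: algebra_simps add_increasing)

lemma size_filter_mset_sum_list:
  "size (filter_mset p (sum_list Bs)) = (\<Sum>B\<leftarrow>Bs. size (filter_mset p B))"
  by (induction Bs) simp_all

lemma many_blocks_dense:
  assumes sizes: "\<forall>B\<in>set Bs. size B = k" and "0 < a" and "0 \<le> b"
    and dense: "real (size (filter_mset p (sum_list Bs))) \<ge> (1 - b * a) * (real (length Bs) * real k)"
  shows "real (length (filter (\<lambda>B. real (size (filter_mset p B)) \<ge> (1 - a) * real k) Bs))
           \<ge> (1 - b) * real (length Bs)"
proof (cases "k = 0")
  case True
  then show ?thesis
    using \<open>0 \<le> b\<close> by (simp add: algebra_simps)
next
  case False
  let ?n = "real (length Bs)"
  define deficit where "deficit B = real k - real (size (filter_mset p B))" for B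
  let ?dense = "\<lambda>B. real (size (filter_mset p B)) \<ge> (1 - a) * real k"
  have deficit_nonneg: "\<forall>B\<in>set Bs. 0 \<le> deficit B"
    using sizes by (simp add: deficit_def) (metis of_nat_le_iff size_filter_mset_lesseq)
  have "(\<Sum>B\<leftarrow>Bs. deficit B) = ?n * real k - real (size (filter_mset p (sum_list Bs)))"
    using sizes by (simp add: deficit_def sum_list_subtractf size_filter_mset_sum_list
        sum_list_triv o_def flip: sum_list_of_nat)
  also have "\<dots> \<le> b * (a * real k) * ?n"
    using dense by (simp add: algebra_simps)
  finally have "a * real k * real (length (filter (\<lambda>B. \<not> ?dense B) Bs)) \<le> a * real k * (b * ?n)"
    using markov_sum_list[OF deficit_nonneg, of "a * real k"]
    by (simp add: deficit_def algebra_simps not_le)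
  then have "real (length (filter (\<lambda>B. \<not> ?dense B) Bs)) \<le> b * ?n"
    using \<open>0 < a\<close> False by simp
  moreover have "real (length (filter ?dense Bs)) + real (length (filter (\<lambda>B. \<not> ?dense B) Bs)) = ?n"
    by (simp flip: of_nat_add add: sum_length_filter_compl)
  ultimately show ?thesis
    unfolding left_diff_distrib by linarith
qed

lemma length_filter_list_all2_mono:
  assumes "list_all2 R xs ys" and "\<And>x y. x \<in> set xs \<Longrightarrow> R x y \<Longrightarrow> P x \<Longrightarrow> Q y"
  shows "length (filter P xs) \<le> length (filter Q ys)"
  using assms by (induction rule: list_all2_induct) (auto intro: le_SucI)

lemma min_sum_select_near_centre:
  assumes "min_sum_select P i x"
    and "real (size (filter_mset (\<lambda>q. norm (q - c) \<le> R) P)) \<ge> (1 - (3/10) ^ (i+1)) * real (size P)"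
  shows "norm (x - c) \<le> 5 ^ (i+1) * R"
  using assms
proof (induction arbitrary: R rule: min_sum_select.induct)
  case (base i P x)
  let ?near = "\<lambda>q. norm (q - c) \<le> R"
  have "7/10 * real (size P) \<le> real (size (filter_mset ?near P))"
  proof (cases "i = 0")
    case True
    then show ?thesis
      using base.prems by simp
  next
    case False
    then obtain p where P: "P = {#p#}"
      using base.hyps(1) size_1_singleton_mset by blast
    have "(3/10 :: real) ^ (i+1) < 1"
      using power_Suc_less_one[of "3/10 :: real" i] by simp
    then have "?near p"
      using base.prems unfolding P by (cases "?near p") simp_all
    then show ?thesis
      unfolding P by simp
  qed
  with base.hyps(2) have "norm (x - c) \<le> 5 * R"
    by (rule compute_winner_near_centre)
  moreover have "5 * R \<le> 5 ^ (i+1) * R"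
  proof (rule mult_right_mono)
    show "(5 :: real) \<le> 5 ^ (i+1)"
      using power_increasing[of 1 "i+1" "5 :: real"] by simp
    show "0 \<le> R"
      using calculation norm_ge_zero[of "x - c"] by linarith
  qed
  ultimately show ?case
    by (rule order_trans)
next
  case (step P k Ps i ws x)
  let ?near = "\<lambda>R q. norm (q - c) \<le> R"
  let ?dense = "\<lambda>B. real (size (filter_mset (?near R) B)) \<ge> (1 - (3/10) ^ (i+1)) * real k"
  have "real (length (filter ?dense Ps)) \<ge> (1 - 3/10) * real (length Ps)"
  proof (rule many_blocks_dense)
    show "\<forall>B\<in>set Ps. size B = k"
      by fact
    show "(1 - 3/10 * (3/10) ^ (i+1)) * (real (length Ps) * real k)
        \<le> real (size (filter_mset (?near R) (sum_list Ps)))"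
      using step.prems step.hyps by simp
  qed simp_all
  also have "length (filter ?dense Ps) \<le> length (filter (?near (5 ^ (i+1) * R)) ws)"
  proof (rule length_filter_list_all2_mono[OF step.IH])
    fix B w
    assume "B \<in> set Ps" and "?dense B"
      and IH: "min_sum_select B i w \<and> (\<forall>R. (1 - (3/10) ^ (i+1)) * real (size B)
        \<le> real (size (filter_mset (?near R) B)) \<longrightarrow> ?near (5 ^ (i+1) * R) w)"
    have "size B = k"
      using step.hyps(4) \<open>B \<in> set Ps\<close> by blast
    then show "?near (5 ^ (i+1) * R) w"
      using \<open>?dense B\<close> by (intro IH[THEN conjunct2, rule_format]) simp
  qed
  finally have "7/10 * real (size (mset ws)) \<le> real (size (filter_mset (?near (5 ^ (i+1) * R)) (mset ws)))"
    using list_all2_lengthD[OF step.IH] by (simp add: mset_filter[symmetric] del: mset_filter)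
  with step.hyps(6) have "norm (x - c) \<le> 5 * (5 ^ (i+1) * R)"
    by (rule compute_winner_near_centre)
  then show ?case
    by simp
qed

theorem lemma4p3:
  fixes A P :: "'a::euclidean_space multiset" and \<epsilon> \<gamma> :: real and i :: nat
  assumes "A \<noteq> {#}" and "\<epsilon> > 0" and "\<gamma> > 0"
    and "real (size (filter_mset (gamma_good A \<epsilon> \<gamma>) P)) \<ge> (1 - (3/10) ^ (i+1)) * real (size P)"
    and "min_sum_select P i x"
  shows "gamma_good A \<epsilon> (5 ^ (i+1) * \<gamma>) x"
proof -
  \<comment> \<open>Only the balls around the mean matter.\<close>
  define r where "r = sqrt (\<epsilon> * opt_cost A / real (size A))"
  have good: "gamma_good A \<epsilon> g = (\<lambda>q. norm (q - mean A) \<le> g * r)" for g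
    by (simp add: fun_eq_iff gamma_good_def r_def)
  have "norm (x - mean A) \<le> 5 ^ (i+1) * (\<gamma> * r)"
    using assms(4) unfolding good by (rule min_sum_select_near_centre[OF assms(5)])
  then show ?thesis
    unfolding good by (simp add: mult.assoc)
qed

end
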